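(* Let $(X,T)$ and $(X',T')$ be minimal Cantor systems such that $(X',T')$ is a factor of $(X,T)$. Then $\mathbb P(X',T')\subseteq\mathbb P(X,T)$.
   Context: A minimal Cantor system is a pair $(X,T)$ where $X$ is a Cantor space, $T:X\to X$ a homeomorphism, and every orbit is dense. $(X',T')$ is a factor of $(X,T)$ if there is a continuous onto $\pi:X\to X'$ with $\pi\circ T=T'\circ\pi$. For $x\in X$, clopen $U$ and $p\ge1$, $\mathrm{PS}_p(x,U)=\{k\in\mathbb Z : T^{k+np}x\in U\ \forall n\in\mathbb Z\}$. An integer $p$ is an essential period of $x$ for $U$ if $\mathrm{PS}_p(x,U)\neq\emptyset$ and $p$ divides every $q\in\mathbb Z$ satisfying $\mathrm{PS}_p(x,U)=\mathrm{PS}_p(x,U)-q$. $\mathbb P(X,T)=\{p\geq 2 : p \text{ is an essential period of some } x\in X \text{ for some clopen } U\}$. *)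

theory Defs
  imports "HOL-Analysis.Analysis"
begin

definition cantor_space :: "'a::metric_space set \<Rightarrow> bool" where
  "cantor_space X \<longleftrightarrow> X \<noteq> {} \<and> compact X
     \<and> (\<forall>x\<in>X. x islimpt X)
     \<and> (\<forall>x\<in>X. connected_component_set X x = {x})"

definition tpow :: "'a set \<Rightarrow> ('a \<Rightarrow> 'a) \<Rightarrow> int \<Rightarrow> 'a \<Rightarrow> 'a" where
  "tpow X T k = (if k \<ge> 0 then T ^^ nat k else inv_into X T ^^ nat (- k))"

definition minimal_cantor_system :: "'a::metric_space set \<Rightarrow> ('a \<Rightarrow> 'a) \<Rightarrow> bool" where
  "minimal_cantor_system X T \<longleftrightarrow> cantor_space X
     \<and> (\<exists>S. homeomorphism X X T S)
     \<and> (\<forall>x\<in>X. X \<subseteq> closure {tpow X T k x | k. True})"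

definition is_factor ::
  "'b::metric_space set \<Rightarrow> ('b \<Rightarrow> 'b) \<Rightarrow> 'a::metric_space set \<Rightarrow> ('a \<Rightarrow> 'a) \<Rightarrow> bool" where
  "is_factor X' T' X T \<longleftrightarrow> (\<exists>\<pi>. continuous_on X \<pi> \<and> \<pi> ` X = X'
     \<and> (\<forall>x\<in>X. \<pi> (T x) = T' (\<pi> x)))"

definition clopen_in :: "'a::topological_space set \<Rightarrow> 'a set \<Rightarrow> bool" where
  "clopen_in X U \<longleftrightarrow> openin (top_of_set X) U \<and> closedin (top_of_set X) U"

definition PS :: "'a set \<Rightarrow> ('a \<Rightarrow> 'a) \<Rightarrow> int \<Rightarrow> 'a \<Rightarrow> 'a set \<Rightarrow> int set" where
  "PS X T p x U = {k. \<forall>n::int. tpow X T (k + n * p) x \<in> U}"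

definition essential_period :: "'a set \<Rightarrow> ('a \<Rightarrow> 'a) \<Rightarrow> int \<Rightarrow> 'a \<Rightarrow> 'a set \<Rightarrow> bool" where
  "essential_period X T p x U \<longleftrightarrow> p \<ge> 1 \<and> PS X T p x U \<noteq> {}
     \<and> (\<forall>q::int. PS X T p x U = (\<lambda>k. k - q) ` PS X T p x U \<longrightarrow> p dvd q)"

definition periods :: "'a::metric_space set \<Rightarrow> ('a \<Rightarrow> 'a) \<Rightarrow> int set" where
  "periods X T = {p. p \<ge> 2 \<and> (\<exists>x\<in>X. \<exists>U. clopen_in X U \<and> essential_period X T p x U)}"

end

theory Submission
  imports Defs
begin

text \<open>If \<open>\<pi>\<close> is the factor map and \<open>U'\<close> a clopen set of \<open>X'\<close>, then \<open>U = \<pi>\<^sup>-\<^sup>1(U')\<close> is clopen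
  in \<open>X\<close>, and for any \<open>x\<close> over \<open>x'\<close> the conjugacy \<open>\<pi> \<circ> T\<^sup>k = T'\<^sup>k \<circ> \<pi>\<close> (for all integers \<open>k\<close>)
  gives \<open>PS\<^sub>p(x, U) = PS\<^sub>p(x', U')\<close>. Hence every essential period of \<open>x'\<close> for \<open>U'\<close> is an
  essential period of \<open>x\<close> for \<open>U\<close>.\<close>

lemma homeomorphism_self_imp_bij_betw:
  assumes "homeomorphism X X T S"
  shows "bij_betw T X X"
  using assms unfolding homeomorphism_def bij_betw_def by (auto intro: inj_on_inverseI)

lemma semiconj_funpow:
  assumes "T ` X \<subseteq> X" and "\<forall>x\<in>X. \<pi> (T x) = T' (\<pi> x)" and "x \<in> X"
  shows "(T ^^ n) x \<in> X \<and> \<pi> ((T ^^ n) x) = (T' ^^ n) (\<pi> x)"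
  using assms by (induction n) auto

lemma semiconj_inv_into:
  assumes "T ` X = X" and "inj_on T' X'" and "\<pi> ` X \<subseteq> X'"
    and "\<forall>x\<in>X. \<pi> (T x) = T' (\<pi> x)" and "w \<in> X"
  shows "inv_into X T w \<in> X \<and> \<pi> (inv_into X T w) = inv_into X' T' (\<pi> w)"
proof -
  define z where "z = inv_into X T w"
  have z: "z \<in> X" "T z = w"
    using assms(1,5) unfolding z_def by (metis inv_into_into, metis f_inv_into_f)
  then have "\<pi> w = T' (\<pi> z)" and "\<pi> z \<in> X'"
    using assms(3,4) by auto
  then have "inv_into X' T' (\<pi> w) = \<pi> z"
    using assms(2) by simp
  with z show ?thesis unfolding z_def by simp
qed

lemma semiconj_tpow:
  assumes "bij_betw T X X" and "inj_on T' X'" and "\<pi> ` X \<subseteq> X'"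
    and "\<forall>x\<in>X. \<pi> (T x) = T' (\<pi> x)" and "x \<in> X"
  shows "tpow X T k x \<in> X \<and> \<pi> (tpow X T k x) = tpow X' T' k (\<pi> x)"
proof -
  have img: "T ` X = X"
    using assms(1) by (simp add: bij_betw_def)
  have "(inv_into X T ^^ n) x \<in> X
      \<and> \<pi> ((inv_into X T ^^ n) x) = (inv_into X' T' ^^ n) (\<pi> x)" for n
  proof (induction n)
    case (Suc n)
    then show ?case
      using semiconj_inv_into[OF img assms(2-4), of "(inv_into X T ^^ n) x"] by simp
  qed (simp add: assms(5))
  moreover have "(T ^^ n) x \<in> X \<and> \<pi> ((T ^^ n) x) = (T' ^^ n) (\<pi> x)" for n
    using semiconj_funpow[OF _ assms(4,5)] img by blast
  ultimately show ?thesis unfolding tpow_def by auto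
qed

lemma PS_preimage:
  assumes "bij_betw T X X" and "inj_on T' X'" and "\<pi> ` X \<subseteq> X'"
    and "\<forall>x\<in>X. \<pi> (T x) = T' (\<pi> x)" and "x \<in> X"
  shows "PS X T p x (X \<inter> \<pi> -` U') = PS X' T' p (\<pi> x) U'"
proof -
  have "tpow X T k x \<in> X \<inter> \<pi> -` U' \<longleftrightarrow> tpow X' T' k (\<pi> x) \<in> U'" for k
    using semiconj_tpow[OF assms, of k] by simp
  then show ?thesis
    unfolding PS_def by simp
qed

lemma clopen_in_preimage:
  assumes "continuous_on X \<pi>" and "\<pi> ` X \<subseteq> X'" and "clopen_in X' U'"
  shows "clopen_in X (X \<inter> \<pi> -` U')"
proof -
  have \<pi>: "\<pi> \<in> X \<rightarrow> X'"
    using assms(2) by blast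
  show ?thesis
    using assms(3) continuous_openin_preimage[OF assms(1) \<pi>]
      continuous_closedin_preimage_gen[OF assms(1) \<pi>]
    unfolding clopen_in_def by simp
qed

lemma periods_mono_factor:
  assumes "bij_betw T X X" and "inj_on T' X'"
    and "continuous_on X \<pi>" and "\<pi> ` X = X'" and "\<forall>x\<in>X. \<pi> (T x) = T' (\<pi> x)"
  shows "periods X' T' \<subseteq> periods X T"
proof
  fix p assume "p \<in> periods X' T'"
  then obtain x' U' where p: "p \<ge> 2" and "x' \<in> X'" and U': "clopen_in X' U'"
    and ess: "essential_period X' T' p x' U'"
    unfolding periods_def by blast
  then obtain x where x: "x \<in> X" "\<pi> x = x'"
    using assms(4) by blast
  have "PS X T p x (X \<inter> \<pi> -` U') = PS X' T' p x' U'"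
    using PS_preimage[OF assms(1,2) _ assms(5) x(1)] assms(4) x(2) by simp
  with ess have "essential_period X T p x (X \<inter> \<pi> -` U')"
    unfolding essential_period_def by simp
  moreover have "clopen_in X (X \<inter> \<pi> -` U')"
    using clopen_in_preimage[OF assms(3) _ U'] assms(4) by simp
  ultimately show "p \<in> periods X T"
    unfolding periods_def using p x(1) by blast
qed

theorem mainTheorem4:
  fixes X :: "'a::metric_space set" and T :: "'a \<Rightarrow> 'a"
    and X' :: "'b::metric_space set" and T' :: "'b \<Rightarrow> 'b"
  assumes "minimal_cantor_system X T" and "minimal_cantor_system X' T'"
    and "is_factor X' T' X T"
  shows "periods X' T' \<subseteq> periods X T"
proof -
  obtain S S' where T: "homeomorphism X X T S" and T': "homeomorphism X' X' T' S'"
    using assms(1,2) unfolding minimal_cantor_system_def by blast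
  have "bij_betw T X X"
    using T by (rule homeomorphism_self_imp_bij_betw)
  moreover have "inj_on T' X'"
    using homeomorphism_self_imp_bij_betw[OF T'] by (rule bij_betw_imp_inj_on)
  moreover obtain \<pi> where "continuous_on X \<pi>" and "\<pi> ` X = X'"
    and "\<forall>x\<in>X. \<pi> (T x) = T' (\<pi> x)"
    using assms(3) unfolding is_factor_def by blast
  ultimately show ?thesis
    by (rule periods_mono_factor)
qed

end
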